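(* Let $N\ge1$, $\lambda_0,\dots,\lambda_N>0$ and $\gamma_0,\dots,\gamma_N\in\mathbb{C}$ distinct, and let $$p(\eta,\zeta)=\sum_{i=0}^N\lambda_i^2\prod_{\substack{j=0\\ j\neq i}}^N(\zeta-\gamma_j)(1+\eta\bar\gamma_j)$$ be the polynomial defining the spectral curve of the corresponding JNR monopole. Then the holomorphic sphere of this JNR monopole is (up to the action of $U(N+1)$) $$q(z)=\Big[\frac{\lambda_0}{z-\gamma_0}:\frac{\lambda_1}{z-\gamma_1}:\cdots:\frac{\lambda_N}{z-\gamma_N}\Big],$$ i.e. $q:\mathbb{P}^1\to\mathbb{P}^N$ is a full holomorphic map of degree $N$, and its lift $\tilde q(z)=\big(\lambda_i\prod_{j\neq i}(z-\gamma_j)\big)_{i=0}^N$ satisfies $$\langle\tilde q(-1/\bar\eta),\tilde q(\zeta)\rangle=\frac{(-1)^N}{\eta^N}\,p(\eta,\zeta).$$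
   Context: $\langle\cdot,\cdot\rangle$ is the standard Hermitian inner product on $\mathbb{C}^{N+1}$, conjugate-linear in the first factor. A holomorphic map $q:\mathbb{P}^1\to\mathbb{P}^N$ is full if its image is not contained in a proper projective subspace. For a charge $N$ hyperbolic monopole whose spectral curve is defined by a polynomial $p$ normalized so that $p(\eta,\zeta)=(-1)^N\eta^N\zeta^N\overline{p(-1/\bar\zeta,-1/\bar\eta)}$ and $p(-1/\bar\zeta,\zeta)\bar\zeta^N>0$ (the JNR polynomial above satisfies these), the holomorphic sphere (Murray–Norbury–Singer) is the degree $N$ full holomorphic map $q:\mathbb{P}^1\to\mathbb{P}^N$, unique up to the action of $U(N+1)$, admitting a polynomial lift $\tilde q$ with $\langle\tilde q(-1/\bar\eta),\tilde q(\zeta)\rangle=(-1)^N\eta^{-N}p(\eta,\zeta)$; its pullback of the Kähler form of $\mathbb{P}^N$ is the curvature of the limiting connection at infinity. *)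

theory Defs
  imports "HOL-Analysis.Analysis" "HOL-Computational_Algebra.Polynomial"
begin

text \<open>A holomorphic map P^1 -> P^N is represented by a polynomial lift
  f 0, ..., f N :: complex poly (homogeneous coordinates of the image of
  the affine point z, the point at infinity being handled by homogenising
  to degree N).\<close>

definition no_common_zero :: "nat \<Rightarrow> (nat \<Rightarrow> complex poly) \<Rightarrow> bool" where
  "no_common_zero N f \<longleftrightarrow> (\<forall>z. \<exists>i\<le>N. poly (f i) z \<noteq> 0)"

text \<open>Degree of the map defined by a lift without common zeros: the maximum
  degree of the component polynomials (no common zero at infinity after
  homogenising to this degree).\<close>
definition lift_degree :: "nat \<Rightarrow> (nat \<Rightarrow> complex poly) \<Rightarrow> nat" where
  "lift_degree N f = Max ((\<lambda>i. degree (f i)) ` {0..N})"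

text \<open>Full: the image is not contained in a proper projective subspace, i.e.
  no nontrivial linear form vanishes identically on the lift.\<close>
definition full_lift :: "nat \<Rightarrow> (nat \<Rightarrow> complex poly) \<Rightarrow> bool" where
  "full_lift N f \<longleftrightarrow>
     (\<forall>c :: nat \<Rightarrow> complex. (\<Sum>i\<le>N. smult (c i) (f i)) = 0 \<longrightarrow> (\<forall>i\<le>N. c i = 0))"

definition herm :: "nat \<Rightarrow> (nat \<Rightarrow> complex) \<Rightarrow> (nat \<Rightarrow> complex) \<Rightarrow> complex" where
  "herm N u v = (\<Sum>i\<le>N. cnj (u i) * v i)"

definition jnr_poly :: "nat \<Rightarrow> (nat \<Rightarrow> real) \<Rightarrow> (nat \<Rightarrow> complex) \<Rightarrow> complex \<Rightarrow> complex \<Rightarrow> complex" where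
  "jnr_poly N lam gam \<eta> \<zeta> =
     (\<Sum>i\<le>N. (complex_of_real (lam i))\<^sup>2 *
        (\<Prod>j\<in>{0..N} - {i}. (\<zeta> - gam j) * (1 + \<eta> * cnj (gam j))))"

definition jnr_lift :: "nat \<Rightarrow> (nat \<Rightarrow> real) \<Rightarrow> (nat \<Rightarrow> complex) \<Rightarrow> nat \<Rightarrow> complex poly" where
  "jnr_lift N lam gam i = smult (complex_of_real (lam i)) (\<Prod>j\<in>{0..N} - {i}. [:- gam j, 1:])"

end

theory Submission
  imports Defs
begin

text \<open>The components of the lift are nodal polynomials: the i-th one vanishes exactly at the
  nodes gam j with j \<noteq> i. Evaluating at the node gam i, where only the i-th component
  survives, shows that the components have no common zero and are linearly independent; each is
  a product of N linear factors, so the map has degree N. The inner product identity holds term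
  by term, because each factor satisfies
  cnj (-1 / cnj \<eta> - g) * (\<zeta> - g) = -(\<zeta> - g) * (1 + \<eta> * cnj g) / \<eta>.\<close>

lemma degree_prod_linear_factors:
  fixes a :: "'a \<Rightarrow> 'b::idom"
  assumes "finite A"
  shows "degree (\<Prod>j\<in>A. [:- a j, 1:]) = card A"
proof -
  have "degree (\<Prod>j\<in>A. [:- a j, 1:]) = (\<Sum>j\<in>A. degree [:- a j, 1:])"
    by (rule degree_prod_eq_sum_degree) auto
  then show ?thesis
    using assms by simp
qed

lemma nodal_family_independent:
  fixes f :: "'a \<Rightarrow> 'b::idom poly"
  assumes "finite A"
    and vanish: "\<And>i k. i \<in> A \<Longrightarrow> k \<in> A \<Longrightarrow> i \<noteq> k \<Longrightarrow> poly (f i) (x k) = 0"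
    and nonzero: "\<And>k. k \<in> A \<Longrightarrow> poly (f k) (x k) \<noteq> 0"
    and combination: "(\<Sum>i\<in>A. smult (c i) (f i)) = 0"
    and "k \<in> A"
  shows "c k = 0"
proof -
  have "0 = poly (\<Sum>i\<in>A. smult (c i) (f i)) (x k)"
    using combination by simp
  also have "\<dots> = (\<Sum>i\<in>A. c i * poly (f i) (x k))"
    by (simp add: poly_sum)
  also have "\<dots> = c k * poly (f k) (x k)"
    using assms(1,5) vanish by (subst sum.remove[of _ k]) auto
  finally show ?thesis
    using nonzero \<open>k \<in> A\<close> by simp
qed

lemma cnj_antipodal_factor:
  fixes \<eta> \<zeta> g :: complex
  assumes "\<eta> \<noteq> 0"
  shows "cnj (- 1 / cnj \<eta> - g) * (\<zeta> - g) = - 1 / \<eta> * ((\<zeta> - g) * (1 + \<eta> * cnj g))"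
  using assms by (simp add: field_simps)

lemma prod_cnj_antipodal_factors:
  fixes \<eta> \<zeta> :: complex and g :: "'a \<Rightarrow> complex"
  assumes "\<eta> \<noteq> 0"
  shows "(\<Prod>j\<in>B. cnj (- 1 / cnj \<eta> - g j) * (\<zeta> - g j))
       = (- 1) ^ card B / \<eta> ^ card B * (\<Prod>j\<in>B. (\<zeta> - g j) * (1 + \<eta> * cnj (g j)))"
proof -
  have "(\<Prod>j\<in>B. cnj (- 1 / cnj \<eta> - g j) * (\<zeta> - g j))
      = (\<Prod>j\<in>B. - 1 / \<eta> * ((\<zeta> - g j) * (1 + \<eta> * cnj (g j))))"
    using assms by (intro prod.cong refl cnj_antipodal_factor)
  then show ?thesis
    by (simp only: prod.distrib prod_constant power_divide)
qed

lemma poly_jnr_lift: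
  "poly (jnr_lift N lam gam i) z = complex_of_real (lam i) * (\<Prod>j\<in>{0..N} - {i}. z - gam j)"
  by (simp add: jnr_lift_def poly_prod)

lemma poly_jnr_lift_off_nodes:
  assumes "i \<le> N" and "z \<noteq> gam i"
  shows "poly (jnr_lift N lam gam i) z =
    (\<Prod>j\<le>N. z - gam j) * (complex_of_real (lam i) / (z - gam i))"
  using assms by (simp add: poly_jnr_lift prod_diff1 atLeast0AtMost)

lemma poly_jnr_lift_eq_0_iff:
  assumes "lam i > 0"
  shows "poly (jnr_lift N lam gam i) z = 0 \<longleftrightarrow> (\<exists>j\<in>{0..N} - {i}. z = gam j)"
  using assms by (simp add: poly_jnr_lift)

lemma poly_jnr_lift_at_own_node:
  assumes "i \<le> N" and "lam i > 0" and "inj_on gam {0..N}"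
  shows "poly (jnr_lift N lam gam i) (gam i) \<noteq> 0"
  using assms by (auto simp: poly_jnr_lift_eq_0_iff inj_on_def)

lemma poly_jnr_lift_at_other_node:
  assumes "k \<le> N" and "i \<noteq> k"
  shows "poly (jnr_lift N lam gam i) (gam k) = 0"
  using assms by (auto simp: poly_jnr_lift)

lemma degree_jnr_lift:
  assumes "i \<le> N" and "lam i > 0"
  shows "degree (jnr_lift N lam gam i) = N"
  using assms by (simp add: jnr_lift_def degree_prod_linear_factors)

lemma no_common_zero_jnr_lift:
  assumes "\<forall>i\<le>N. lam i > 0" and "inj_on gam {0..N}"
  shows "no_common_zero N (jnr_lift N lam gam)"
  unfolding no_common_zero_def
proof
  fix z
  show "\<exists>i\<le>N. poly (jnr_lift N lam gam i) z \<noteq> 0"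
  proof (cases "\<exists>k\<le>N. z = gam k")
    case True
    then obtain k where "k \<le> N" "z = gam k"
      by blast
    with assms show ?thesis
      using poly_jnr_lift_at_own_node by blast
  next
    case False
    then show ?thesis
      using assms(1) by (auto simp: poly_jnr_lift_eq_0_iff)
  qed
qed

lemma lift_degree_jnr_lift:
  assumes "\<forall>i\<le>N. lam i > 0"
  shows "lift_degree N (jnr_lift N lam gam) = N"
proof -
  have "(\<lambda>i. degree (jnr_lift N lam gam i)) ` {0..N} = {N}"
    using assms degree_jnr_lift by auto
  then show ?thesis
    by (simp add: lift_degree_def)
qed

lemma full_lift_jnr_lift:
  assumes "\<forall>i\<le>N. lam i > 0" and "inj_on gam {0..N}"
  shows "full_lift N (jnr_lift N lam gam)"
  unfolding full_lift_def
proof (intro allI impI)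
  fix c :: "nat \<Rightarrow> complex" and k
  assume combination: "(\<Sum>i\<le>N. smult (c i) (jnr_lift N lam gam i)) = 0" and "k \<le> N"
  show "c k = 0"
  proof (rule nodal_family_independent[of "{..N}" "jnr_lift N lam gam" gam])
    show "poly (jnr_lift N lam gam i) (gam j) = 0" if "i \<in> {..N}" "j \<in> {..N}" "i \<noteq> j" for i j
      using that by (simp add: poly_jnr_lift_at_other_node)
    show "poly (jnr_lift N lam gam j) (gam j) \<noteq> 0" if "j \<in> {..N}" for j
      using that assms by (simp add: poly_jnr_lift_at_own_node)
  qed (use combination \<open>k \<le> N\<close> in simp_all)
qed

lemma herm_jnr_lift:
  assumes "\<eta> \<noteq> 0"
  shows "herm N (\<lambda>i. poly (jnr_lift N lam gam i) (- 1 / cnj \<eta>))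
                (\<lambda>i. poly (jnr_lift N lam gam i) \<zeta>)
         = (- 1) ^ N / \<eta> ^ N * jnr_poly N lam gam \<eta> \<zeta>"
proof -
  have card_others: "card ({0..N} - {i}) = N" if "i \<le> N" for i
    using that by simp
  have summand: "cnj (poly (jnr_lift N lam gam i) (- 1 / cnj \<eta>)) * poly (jnr_lift N lam gam i) \<zeta>
      = (- 1) ^ N / \<eta> ^ N * ((complex_of_real (lam i))\<^sup>2 *
          (\<Prod>j\<in>{0..N} - {i}. (\<zeta> - gam j) * (1 + \<eta> * cnj (gam j))))"
    if "i \<le> N" for i
  proof -
    have "cnj (poly (jnr_lift N lam gam i) (- 1 / cnj \<eta>)) * poly (jnr_lift N lam gam i) \<zeta>
        = (complex_of_real (lam i))\<^sup>2 *
            (\<Prod>j\<in>{0..N} - {i}. cnj (- 1 / cnj \<eta> - gam j) * (\<zeta> - gam j))"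
      by (simp add: poly_jnr_lift cnj_prod prod.distrib power2_eq_square)
    also have "\<dots> = (complex_of_real (lam i))\<^sup>2 * ((- 1) ^ N / \<eta> ^ N *
        (\<Prod>j\<in>{0..N} - {i}. (\<zeta> - gam j) * (1 + \<eta> * cnj (gam j))))"
      using that by (simp only: prod_cnj_antipodal_factors[OF assms] card_others)
    finally show ?thesis
      by simp
  qed
  show ?thesis
    unfolding herm_def jnr_poly_def sum_distrib_left
    using summand by (intro sum.cong) auto
qed

theorem mainTheorem5:
  fixes N :: nat and lam :: "nat \<Rightarrow> real" and gam :: "nat \<Rightarrow> complex"
  assumes "N \<ge> 1"
    and "\<forall>i\<le>N. lam i > 0"
    and "inj_on gam {0..N}"
  shows "(\<forall>z. (\<forall>j\<le>N. z \<noteq> gam j) \<longrightarrow>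
            (\<forall>i\<le>N. poly (jnr_lift N lam gam i) z =
               (\<Prod>j\<le>N. z - gam j) * (complex_of_real (lam i) / (z - gam i))))
       \<and> no_common_zero N (jnr_lift N lam gam)
       \<and> lift_degree N (jnr_lift N lam gam) = N
       \<and> full_lift N (jnr_lift N lam gam)
       \<and> (\<forall>\<eta> \<zeta>. \<eta> \<noteq> 0 \<longrightarrow>
            herm N (\<lambda>i. poly (jnr_lift N lam gam i) (- 1 / cnj \<eta>))
                   (\<lambda>i. poly (jnr_lift N lam gam i) \<zeta>)
            = (-1) ^ N / \<eta> ^ N * jnr_poly N lam gam \<eta> \<zeta>)"
  using assms(2,3)
  by (blast intro: poly_jnr_lift_off_nodes no_common_zero_jnr_lift lift_degree_jnr_lift
      full_lift_jnr_lift herm_jnr_lift)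

end
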